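(* For $s\in\mu_r$, $u,v\in\mathcal{A}_1$, $w\in\mathcal{A}_r$: \[ (u\diamond_1v)\diamond_s w=u\diamond_s(v\diamond_s w). \]
   Context: Fix $r\ge1$, $\mu_r$ the $r$th roots of unity, $\mathcal{A}_r=\mathbb{Q}\langle x,y_s\mid s\in\mu_r\rangle$ the free noncommutative polynomial algebra over $\mathbb{Q}$, $\mathcal{A}_1=\mathbb{Q}\langle x,y\rangle$ with $y=y_1$. Write $z=x+y_1$, $z_s=x+y_s$, $\delta(1)=0$, $\delta(s)=1$ ($s\ne1$), $z_s^\delta=x+\delta(s)y_s$, $z_{k,s}=x^{k-1}y_s$. Let $\varphi$ be the algebra automorphism of $\mathcal{A}_r$ with $\varphi(x)=z$, $\varphi(y_s)=\delta(s)y_s-y_1$. Every word is uniquely $z_{k_1,s_1}\cdots z_{k_l,s_l}x^a$ ($l,a\ge0$); define linear maps $\mathcal{I}(z_{k_1,s_1}\cdots z_{k_l,s_l}x^a)=z_{k_1,s_1}z_{k_2,s_1s_2}\cdots z_{k_l,s_1\cdots s_l}x^a$ and $M_s(z_{k_1,s_1}\cdots z_{k_l,s_l}x^a)=z_{k_1,ss_1}z_{k_2,s_2}\cdots z_{k_l,s_l}x^a$ (with $M_s(x^a)=x^a$), and $\psi_s=\varphi\circ\mathcal{I}\circ M_s$. Diamond product: for $s\in\mu_r$, $\diamond_s:\mathcal{A}_1\times\mathcal{A}_r\to\mathcal{A}_r$ is the $\mathbb{Q}$-bilinear map defined recursively on words by $1\diamond_s w=w$, $v\diamond_s1=\psi_s\varphi(v)$,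 and for $v\in\mathcal{A}_1$, $w\in\mathcal{A}_r$, $1\ne t\in\mu_r$: $vx\diamond_s wx=(v\diamond_s wx)x-(vy\diamond_s w)x$; $vy\diamond_s wx=(v\diamond_s wx)y+(vy\diamond_s w)x$; $vx\diamond_s wy=(v\diamond_s wy)x+(vx\diamond_s w)y$; $vy\diamond_s wy=(v\diamond_s wy)y-(vx\diamond_s w)y$; $vx\diamond_s wy_t=(v\diamond_s wy_t)x+(v\diamond_s wz_t)y_t-(vy\diamond_s w)y_t$; $vy\diamond_s wy_t=(v\diamond_s wy_t)y-(v\diamond_s wz_t)y_t+(vy\diamond_s w)y_t$. (For $s=1$ and $v,w\in\mathcal{A}_1$, $v\diamond_1w\in\mathcal{A}_1$.) *)

theory Defs
  imports Complex_Main "HOL-Library.Poly_Mapping"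
begin

(* Letters: x, and y_s indexed by a complex number s (intended: s an r-th root of unity). *)
datatype letter = X | Y complex

type_synonym word = "letter list"
type_synonym ncpoly = "word \<Rightarrow>\<^sub>0 rat"

definition mu :: "nat \<Rightarrow> complex set" where
  "mu r = {s. s ^ r = 1}"

definition wd :: "word \<Rightarrow> ncpoly" where
  "wd w = Poly_Mapping.single w 1"

definition Alg :: "nat \<Rightarrow> ncpoly set" where
  "Alg r = {p. \<forall>w \<in> Poly_Mapping.keys p. \<forall>t. Y t \<in> set w \<longrightarrow> t \<in> mu r}"

definition scale :: "rat \<Rightarrow> ncpoly \<Rightarrow> ncpoly" where
  "scale c p = Poly_Mapping.map (\<lambda>a. c * a) p"

definition lin :: "(word \<Rightarrow> ncpoly) \<Rightarrow> ncpoly \<Rightarrow> ncpoly" where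
  "lin f p = (\<Sum>w\<in>Poly_Mapping.keys p. scale (Poly_Mapping.lookup p w) (f w))"

definition bilin :: "(word \<Rightarrow> word \<Rightarrow> ncpoly) \<Rightarrow> ncpoly \<Rightarrow> ncpoly \<Rightarrow> ncpoly" where
  "bilin f p q = (\<Sum>a\<in>Poly_Mapping.keys p. \<Sum>b\<in>Poly_Mapping.keys q. scale (Poly_Mapping.lookup p a * Poly_Mapping.lookup q b) (f a b))"

definition ncmult :: "ncpoly \<Rightarrow> ncpoly \<Rightarrow> ncpoly" where
  "ncmult = bilin (\<lambda>a b. wd (a @ b))"

definition rapp :: "letter \<Rightarrow> ncpoly \<Rightarrow> ncpoly" where
  "rapp c p = lin (\<lambda>w. wd (w @ [c])) p"

fun phi_letter :: "letter \<Rightarrow> ncpoly" where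
  "phi_letter X = wd [X] + wd [Y 1]"
| "phi_letter (Y t) = (if t = 1 then 0 else wd [Y t]) - wd [Y 1]"

definition phi_word :: "word \<Rightarrow> ncpoly" where
  "phi_word w = foldr ncmult (map phi_letter w) (wd [])"

definition phi :: "ncpoly \<Rightarrow> ncpoly" where
  "phi = lin phi_word"

fun Iw :: "complex \<Rightarrow> word \<Rightarrow> word" where
  "Iw acc [] = []"
| "Iw acc (X # w) = X # Iw acc w"
| "Iw acc (Y t # w) = Y (acc * t) # Iw (acc * t) w"

fun Mw :: "complex \<Rightarrow> word \<Rightarrow> word" where
  "Mw s [] = []"
| "Mw s (X # w) = X # Mw s w"
| "Mw s (Y t # w) = Y (s * t) # w"

definition psi :: "complex \<Rightarrow> ncpoly \<Rightarrow> ncpoly" where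
  "psi s p = phi (lin (\<lambda>w. wd (Iw 1 (Mw s w))) p)"

(* diamond product on words, with both words given REVERSED (last letter first).
   Letters y_u with u <> 1 in the left argument (outside A_1) are mapped to 0 (irrelevant). *)
function dwr :: "complex \<Rightarrow> word \<Rightarrow> word \<Rightarrow> ncpoly" where
  "dwr s [] w = wd (rev w)"
| "dwr s (a # v) [] = psi s (phi (wd (rev (a # v))))"
| "dwr s (X # v) (X # w) = rapp X (dwr s v (X # w)) - rapp X (dwr s (Y 1 # v) w)"
| "dwr s (X # v) (Y t # w) =
     (if t = 1 then rapp X (dwr s v (Y 1 # w)) + rapp (Y 1) (dwr s (X # v) w)
      else rapp X (dwr s v (Y t # w)) + rapp (Y t) (dwr s v (X # w) + dwr s v (Y t # w))
           - rapp (Y t) (dwr s (Y 1 # v) w))"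
| "dwr s (Y u # v) (X # w) =
     (if u = 1 then rapp (Y 1) (dwr s v (X # w)) + rapp X (dwr s (Y 1 # v) w) else 0)"
| "dwr s (Y u # v) (Y t # w) =
     (if u = 1 then
        (if t = 1 then rapp (Y 1) (dwr s v (Y 1 # w)) - rapp (Y 1) (dwr s (X # v) w)
         else rapp (Y 1) (dwr s v (Y t # w)) - rapp (Y t) (dwr s v (X # w) + dwr s v (Y t # w))
              + rapp (Y t) (dwr s (Y 1 # v) w))
      else 0)"
  by pat_completeness auto
termination
  by (relation "measure (\<lambda>(s, v, w). length v + length w)") auto

definition dw :: "complex \<Rightarrow> word \<Rightarrow> word \<Rightarrow> ncpoly" where
  "dw s v w = dwr s (rev v) (rev w)"

definition diamond :: "complex \<Rightarrow> ncpoly \<Rightarrow> ncpoly \<Rightarrow> ncpoly" where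
  "diamond s = bilin (dw s)"

end

theory Submission
  imports Defs
begin

text \<open>
  The substitution \<open>\<phi>\<close> is an involution, and conjugating \<open>\<diamond>\<^sub>s\<close> by it (for a left factor
  in \<open>\<A>\<^sub>1\<close>) gives a much simpler product \<open>\<star>\<^sub>s\<close>, a twisted stuffle defined by recursion on
  last letters: \<open>x\<close> passes through on either side,
  \<open>u y\<^sub>\<alpha> \<star>\<^sub>s v y\<^sub>\<beta> = (u \<star>\<^sub>s v y\<^sub>\<beta>) y\<^sub>\<beta> + (u y\<^sub>\<alpha> \<star>\<^sub>s v) y\<^sub>\<beta> + (u \<star>\<^sub>s v) x y\<^sub>\<beta>\<close>,
  \<open>1 \<star>\<^sub>s v = v\<close>, and \<open>u \<star>\<^sub>s 1\<close> is \<open>u\<close> with every \<open>y\<close>-index replaced by \<open>s\<close> (this is \<open>\<psi>\<^sub>s\<close> on \<open>\<A>\<^sub>1\<close>).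
  The identity \<open>(u \<star>\<^sub>1 v) \<star>\<^sub>s w = u \<star>\<^sub>s (v \<star>\<^sub>s w)\<close> then follows by induction on the total
  length of three words: when all three end in a \<open>y\<close>, both sides expand, by the recursion and
  bilinearity, into the same combination of seven smaller instances.
\<close>

section \<open>Linear and bilinear extensions\<close>

lemma lookup_scale [simp]: "Poly_Mapping.lookup (scale c p) w = c * Poly_Mapping.lookup p w"
  by (simp add: scale_def Poly_Mapping.map.rep_eq when_def)

lemma scale_0_left [simp]: "scale 0 p = 0"
  and scale_0_right [simp]: "scale c 0 = 0"
  and scale_1 [simp]: "scale 1 p = p"
  by (rule poly_mapping_eqI; simp)+

lemma scale_add_left: "scale (a + b) p = scale a p + scale b p"
  by (rule poly_mapping_eqI) (simp add: lookup_add algebra_simps)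

lemma scale_add_right: "scale c (p + q) = scale c p + scale c q"
  by (rule poly_mapping_eqI) (simp add: lookup_add algebra_simps)

lemma scale_minus_right: "scale c (- p) = - scale c p"
  by (rule poly_mapping_eqI) simp

lemma scale_diff_right: "scale c (p - q) = scale c p - scale c q"
  by (rule poly_mapping_eqI) (simp add: lookup_minus algebra_simps)

lemma scale_scale: "scale a (scale b p) = scale (a * b) p"
  by (rule poly_mapping_eqI) simp

lemma scale_sum: "scale c (sum f S) = (\<Sum>i\<in>S. scale c (f i))"
  by (induction S rule: infinite_finite_induct) (simp_all add: scale_add_right)

lemma keys_scale: "Poly_Mapping.keys (scale c p) \<subseteq> Poly_Mapping.keys p"
  by (auto simp: in_keys_iff)

lemma lin_superset:
  assumes "finite S" "Poly_Mapping.keys p \<subseteq> S"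
  shows "lin f p = (\<Sum>w\<in>S. scale (Poly_Mapping.lookup p w) (f w))"
  unfolding lin_def
  by (rule sum.mono_neutral_left) (use assms in \<open>auto simp: in_keys_iff\<close>)

lemma lin_zero [simp]: "lin f 0 = 0"
  by (simp add: lin_def)

lemma lin_wd [simp]: "lin f (wd w) = f w"
  by (simp add: lin_def wd_def)

lemma lin_add: "lin f (p + q) = lin f p + lin f q"
proof -
  let ?S = "Poly_Mapping.keys p \<union> Poly_Mapping.keys q"
  have "lin f (p + q) = (\<Sum>w\<in>?S. scale (Poly_Mapping.lookup (p + q) w) (f w))"
    by (rule lin_superset) (auto dest: set_mp[OF keys_add])
  also have "\<dots> = (\<Sum>w\<in>?S. scale (Poly_Mapping.lookup p w) (f w))
                  + (\<Sum>w\<in>?S. scale (Poly_Mapping.lookup q w) (f w))"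
    by (simp add: lookup_add scale_add_left sum.distrib)
  also have "\<dots> = lin f p + lin f q"
    by (subst (1 2) lin_superset[of ?S]) auto
  finally show ?thesis .
qed

lemma lin_uminus: "lin f (- p) = - lin f p"
  using lin_add[of f "- p" p] by (simp add: eq_neg_iff_add_eq_0)

lemma lin_diff: "lin f (p - q) = lin f p - lin f q"
  using lin_add[of f p "- q"] by (simp add: lin_uminus)

lemma lin_scale: "lin f (scale c p) = scale c (lin f p)"
proof -
  have "lin f (scale c p) = (\<Sum>w\<in>Poly_Mapping.keys p. scale (Poly_Mapping.lookup (scale c p) w) (f w))"
    by (rule lin_superset) (auto dest: set_mp[OF keys_scale])
  then show ?thesis
    by (simp add: lin_def scale_sum scale_scale)
qed

lemma lin_sum: "lin f (sum g S) = (\<Sum>i\<in>S. lin f (g i))"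
  by (induction S rule: infinite_finite_induct) (simp_all add: lin_add)

lemma lin_fun_zero [simp]: "lin (\<lambda>w. 0) p = 0"
  by (simp add: lin_def)

lemma lin_fun_add: "lin (\<lambda>w. f w + g w) p = lin f p + lin g p"
  by (simp add: lin_def scale_add_right sum.distrib)

lemma lin_fun_uminus: "lin (\<lambda>w. - f w) p = - lin f p"
  by (simp add: lin_def scale_minus_right sum_negf)

lemma lin_fun_diff: "lin (\<lambda>w. f w - g w) p = lin f p - lin g p"
  by (simp add: lin_def scale_diff_right sum_subtractf)

lemma lin_cong: "(\<And>w. w \<in> Poly_Mapping.keys p \<Longrightarrow> f w = g w) \<Longrightarrow> lin f p = lin g p"
  by (simp add: lin_def)

lemma lin_comp: "lin f (lin g p) = lin (\<lambda>w. lin f (g w)) p"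
proof -
  have "lin f (lin g p) = (\<Sum>w\<in>Poly_Mapping.keys p. lin f (scale (Poly_Mapping.lookup p w) (g w)))"
    by (simp only: lin_def[of g p] lin_sum)
  then show ?thesis
    by (simp add: lin_scale lin_def[of _ p])
qed

lemma lin_swap: "lin (\<lambda>a. lin (\<lambda>b. G a b) q) p = lin (\<lambda>b. lin (\<lambda>a. G a b) p) q"
  unfolding lin_def scale_sum scale_scale
  by (subst sum.swap) (simp add: mult.commute)

lemma lin_wd_id: "lin wd p = p"
proof (rule poly_mapping_eqI)
  fix k
  show "Poly_Mapping.lookup (lin wd p) k = Poly_Mapping.lookup p k"
    unfolding lin_def lookup_sum
    by (cases "k \<in> Poly_Mapping.keys p")
       (simp_all add: wd_def lookup_single when_def in_keys_iff if_distrib[of "\<lambda>x. _ * x"]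
          sum.delta' cong: if_cong)
qed

lemma keys_lin: "Poly_Mapping.keys (lin f p) \<subseteq> (\<Union>w\<in>Poly_Mapping.keys p. Poly_Mapping.keys (f w))"
  unfolding lin_def using keys_sum keys_scale by fastforce

lemma bilin_conv_lin: "bilin F p q = lin (\<lambda>a. lin (\<lambda>b. F a b) q) p"
  by (simp add: bilin_def lin_def scale_sum scale_scale)

lemma bilin_wd [simp]: "bilin F (wd a) (wd b) = F a b"
  by (simp add: bilin_conv_lin)

lemma bilin_zero_left [simp]: "bilin F 0 q = 0"
  and bilin_zero_right [simp]: "bilin F p 0 = 0"
  by (simp_all add: bilin_conv_lin)

lemma bilin_add_left: "bilin F (p + p') q = bilin F p q + bilin F p' q"
  and bilin_add_right: "bilin F p (q + q') = bilin F p q + bilin F p q'"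
  by (simp_all add: bilin_conv_lin lin_add lin_fun_add)

lemma bilin_uminus_left: "bilin F (- p) q = - bilin F p q"
  and bilin_uminus_right: "bilin F p (- q) = - bilin F p q"
  by (simp_all add: bilin_conv_lin lin_uminus lin_fun_uminus)

lemma bilin_diff_left: "bilin F (p - p') q = bilin F p q - bilin F p' q"
  and bilin_diff_right: "bilin F p (q - q') = bilin F p q - bilin F p q'"
  by (simp_all add: bilin_conv_lin lin_diff lin_fun_diff)

lemma bilin_lin_left: "bilin F (lin f p) q = lin (\<lambda>a. bilin F (f a) q) p"
  by (simp add: bilin_conv_lin lin_comp)

lemma bilin_lin_right: "bilin F p (lin g q) = lin (\<lambda>b. bilin F p (g b)) q"
  by (simp add: bilin_conv_lin lin_comp) (rule lin_swap)

lemma bilin_fun_add: "bilin (\<lambda>a b. F a b + G a b) p q = bilin F p q + bilin G p q"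
  by (simp add: bilin_conv_lin lin_fun_add)


lemma wd_snoc: "wd (w @ [c]) = rapp c (wd w)"
  by (simp add: rapp_def)

lemma rapp_zero [simp]: "rapp c 0 = 0"
  and rapp_add [simp]: "rapp c (p + q) = rapp c p + rapp c q"
  and rapp_uminus [simp]: "rapp c (- p) = - rapp c p"
  and rapp_diff [simp]: "rapp c (p - q) = rapp c p - rapp c q"
  by (simp_all add: rapp_def lin_add lin_uminus lin_diff)

lemma rapp_lin: "rapp c (lin f p) = lin (\<lambda>w. rapp c (f w)) p"
  by (simp add: rapp_def lin_comp)

lemma lin_rapp: "lin f (rapp c p) = lin (\<lambda>w. f (w @ [c])) p"
  by (simp add: rapp_def lin_comp)

lemma bilin_rapp_left: "bilin F (rapp c p) q = bilin (\<lambda>a b. F (a @ [c]) b) p q"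
  and bilin_rapp_right: "bilin F p (rapp c q) = bilin (\<lambda>a b. F a (b @ [c])) p q"
  by (simp_all add: bilin_conv_lin lin_rapp)

lemma bilin_fun_rapp: "bilin (\<lambda>a b. rapp c (F a b)) p q = rapp c (bilin F p q)"
  by (simp add: bilin_conv_lin rapp_lin)

lemma ncmult_assoc: "ncmult (ncmult p q) r = ncmult p (ncmult q r)"
  by (simp add: ncmult_def bilin_conv_lin lin_comp)

lemma ncmult_one_left: "ncmult (wd []) p = p"
  and ncmult_one_right: "ncmult p (wd []) = p"
  by (simp_all add: ncmult_def bilin_conv_lin lin_wd_id)

lemma ncmult_letter_right: "ncmult p (wd [c]) = rapp c p"
  by (simp add: ncmult_def bilin_conv_lin rapp_def)

lemma ncmult_zero_right: "ncmult p 0 = 0"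
  and ncmult_add_right: "ncmult p (q + q') = ncmult p q + ncmult p q'"
  and ncmult_diff_right: "ncmult p (q - q') = ncmult p q - ncmult p q'"
  by (simp_all add: ncmult_def bilin_add_right bilin_diff_right)

lemma ncmult_lin_left: "ncmult (lin f p) q = lin (\<lambda>w. ncmult (f w) q) p"
  by (simp add: ncmult_def bilin_lin_left)

lemma phi_word_snoc: "phi_word (w @ [c]) = ncmult (phi_word w) (phi_letter c)"
proof -
  have foldr_ncmult: "foldr ncmult ps (ncmult p q) = ncmult (foldr ncmult ps p) q" for ps p q
    by (induction ps) (simp_all add: ncmult_assoc)
  have "phi_word (w @ [c]) = foldr ncmult (map phi_letter w) (ncmult (wd []) (phi_letter c))"
    by (simp add: phi_word_def ncmult_one_left ncmult_one_right)
  also have "\<dots> = ncmult (phi_word w) (phi_letter c)"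
    by (simp add: foldr_ncmult phi_word_def)
  finally show ?thesis .
qed

lemma phi_zero [simp]: "phi 0 = 0"
  and phi_add [simp]: "phi (p + q) = phi p + phi q"
  and phi_diff [simp]: "phi (p - q) = phi p - phi q"
  by (simp_all add: phi_def lin_add lin_uminus lin_diff)

lemma phi_nil [simp]: "phi (wd []) = wd []"
  by (simp add: phi_def phi_word_def)

lemma phi_lin: "phi (lin f p) = lin (\<lambda>w. phi (f w)) p"
  by (simp add: phi_def lin_comp)

lemma phi_conv_lin: "phi p = lin (\<lambda>w. phi (wd w)) p"
  by (simp add: phi_def)

lemma phi_rapp: "phi (rapp c p) = ncmult (phi p) (phi_letter c)"
  by (simp add: phi_def lin_rapp phi_word_snoc ncmult_lin_left)

lemma phi_rapp_X [simp]: "phi (rapp X p) = rapp X (phi p) + rapp (Y 1) (phi p)"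
  by (simp add: phi_rapp ncmult_add_right ncmult_letter_right)

lemma phi_rapp_Y [simp]:
  "phi (rapp (Y t) p) = (if t = 1 then 0 else rapp (Y t) (phi p)) - rapp (Y 1) (phi p)"
  by (simp add: phi_rapp ncmult_diff_right ncmult_letter_right ncmult_zero_right)

lemma phi_phi [simp]: "phi (phi p) = p"
proof -
  have phi_phi_wd: "phi (phi (wd w)) = wd w" for w
  proof (induction w rule: rev_induct)
    case (snoc c w)
    then show ?case
      by (cases c) (simp_all add: wd_snoc)
  qed simp
  have "phi (phi p) = lin (\<lambda>w. phi (phi (wd w))) p"
    by (subst phi_conv_lin) (rule phi_lin)
  then show ?thesis
    by (simp add: phi_phi_wd lin_wd_id)
qed


section \<open>The twisted stuffle\<close>

fun reindex_y :: "complex \<Rightarrow> letter \<Rightarrow> letter" where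
  "reindex_y s X = X"
| "reindex_y s (Y t) = Y s"

definition reindex :: "complex \<Rightarrow> ncpoly \<Rightarrow> ncpoly" where
  "reindex s = lin (\<lambda>w. wd (map (reindex_y s) w))"

text \<open>
  Like \<^const>\<open>dwr\<close>, the recursion reads both words from the right, so they are stored
  reversed.
\<close>

fun tstuffle_rev :: "complex \<Rightarrow> word \<Rightarrow> word \<Rightarrow> ncpoly" where
  "tstuffle_rev s [] b = wd (rev b)"
| "tstuffle_rev s (l # a) [] = wd (rev (map (reindex_y s) (l # a)))"
| "tstuffle_rev s (X # a) (l # b) = rapp X (tstuffle_rev s a (l # b))"
| "tstuffle_rev s (Y u # a) (X # b) = rapp X (tstuffle_rev s (Y u # a) b)"
| "tstuffle_rev s (Y u # a) (Y t # b) =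
     rapp (Y t) (tstuffle_rev s a (Y t # b)) + rapp (Y t) (tstuffle_rev s (Y u # a) b)
     + rapp (Y t) (rapp X (tstuffle_rev s a b))"

definition tstuffle :: "complex \<Rightarrow> ncpoly \<Rightarrow> ncpoly \<Rightarrow> ncpoly" where
  "tstuffle s = bilin (\<lambda>a b. tstuffle_rev s (rev a) (rev b))"

lemma tstuffle_rev_Nil_right: "tstuffle_rev s a [] = wd (rev (map (reindex_y s) a))"
  by (cases a) simp_all

lemma tstuffle_rev_X_left: "tstuffle_rev s (X # a) b = rapp X (tstuffle_rev s a b)"
  by (cases b) (simp_all add: tstuffle_rev_Nil_right wd_snoc)

lemma tstuffle_rev_X_right: "tstuffle_rev s a (X # b) = rapp X (tstuffle_rev s a b)"
proof (induction a)
  case (Cons l a)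
  then show ?case
    by (cases l) (simp_all add: tstuffle_rev_X_left)
qed (simp add: wd_snoc)

lemma tstuffle_zero_left [simp]: "tstuffle s 0 q = 0"
  and tstuffle_zero_right [simp]: "tstuffle s p 0 = 0"
  and tstuffle_add_left [simp]: "tstuffle s (p + p') q = tstuffle s p q + tstuffle s p' q"
  and tstuffle_add_right [simp]: "tstuffle s p (q + q') = tstuffle s p q + tstuffle s p q'"
  and tstuffle_uminus_left [simp]: "tstuffle s (- p) q = - tstuffle s p q"
  and tstuffle_uminus_right [simp]: "tstuffle s p (- q) = - tstuffle s p q"
  and tstuffle_diff_right [simp]: "tstuffle s p (q - q') = tstuffle s p q - tstuffle s p q'"
  by (simp_all add: tstuffle_def bilin_add_left bilin_add_right bilin_uminus_left
      bilin_uminus_right bilin_diff_left bilin_diff_right)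

lemma tstuffle_lin_left: "tstuffle s (lin f p) q = lin (\<lambda>a. tstuffle s (f a) q) p"
  and tstuffle_lin_right: "tstuffle s p (lin g q) = lin (\<lambda>b. tstuffle s p (g b)) q"
  by (simp_all add: tstuffle_def bilin_lin_left bilin_lin_right)

lemma tstuffle_conv_lin: "tstuffle s p q = lin (\<lambda>a. lin (\<lambda>b. tstuffle s (wd a) (wd b)) q) p"
  by (simp add: tstuffle_def bilin_conv_lin)

lemma tstuffle_rapp_X_left [simp]: "tstuffle s (rapp X p) q = rapp X (tstuffle s p q)"
  and tstuffle_rapp_X_right [simp]: "tstuffle s p (rapp X q) = rapp X (tstuffle s p q)"
  by (simp_all add: tstuffle_def bilin_rapp_left bilin_rapp_right tstuffle_rev_X_left
      tstuffle_rev_X_right bilin_fun_rapp)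

lemma tstuffle_rapp_Y_Y [simp]:
  "tstuffle s (rapp (Y u) p) (rapp (Y t) q) =
     rapp (Y t) (tstuffle s p (rapp (Y t) q)) + rapp (Y t) (tstuffle s (rapp (Y u) p) q)
     + rapp (Y t) (rapp X (tstuffle s p q))"
  by (simp add: tstuffle_def bilin_rapp_left bilin_rapp_right bilin_fun_add bilin_fun_rapp)

lemma tstuffle_one_left [simp]: "tstuffle s (wd []) q = q"
  by (simp add: tstuffle_def bilin_conv_lin lin_wd_id)

lemma tstuffle_one_right: "tstuffle s p (wd []) = reindex s p"
  by (simp add: tstuffle_def bilin_conv_lin reindex_def tstuffle_rev_Nil_right rev_map)

lemma reindex_y_reindex_y [simp]: "reindex_y s (reindex_y t l) = reindex_y s l"
  by (cases l) simp_all

lemma reindex_y_comp [simp]: "reindex_y s \<circ> reindex_y t = reindex_y s"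
proof
  show "(reindex_y s \<circ> reindex_y t) l = reindex_y s l" for l
    by (cases l) simp_all
qed

lemma reindex_wd: "reindex s (wd w) = wd (map (reindex_y s) w)"
  and reindex_add: "reindex s (p + q) = reindex s p + reindex s q"
  and reindex_rapp: "reindex s (rapp c p) = rapp (reindex_y s c) (reindex s p)"
  by (simp_all add: reindex_def lin_add lin_rapp rapp_lin wd_snoc[symmetric])

lemma reindex_lin: "reindex s (lin f p) = lin (\<lambda>w. reindex s (f w)) p"
  by (simp add: reindex_def lin_comp)

lemma tstuffle_reindex_left: "tstuffle s (reindex t p) q = tstuffle s p q"
proof -
  have rev_word: "tstuffle_rev s (map (reindex_y t) a) b = tstuffle_rev s a b" for a b
    by (induction s a b rule: tstuffle_rev.induct) (simp_all add: tstuffle_rev_Nil_right)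
  show ?thesis
    by (simp add: tstuffle_def reindex_def bilin_conv_lin lin_comp rev_map rev_word)
qed

lemma reindex_tstuffle: "reindex s (tstuffle t p q) = tstuffle s p (reindex s q)"
proof -
  have rev_word: "reindex s (tstuffle_rev t a b) = tstuffle_rev s a (map (reindex_y s) b)" for a b
    by (induction t a b rule: tstuffle_rev.induct)
       (simp_all add: reindex_wd reindex_add reindex_rapp rev_map tstuffle_rev_Nil_right)
  have "reindex s (tstuffle t p q)
      = lin (\<lambda>a. lin (\<lambda>b. tstuffle_rev s (rev a) (rev (map (reindex_y s) b))) q) p"
    by (simp add: tstuffle_def bilin_conv_lin reindex_lin rev_word rev_map)
  also have "\<dots> = tstuffle s p (reindex s q)"
    by (simp add: tstuffle_def bilin_conv_lin reindex_def lin_comp)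
  finally show ?thesis .
qed


section \<open>Associativity of the twisted stuffle\<close>

lemma tstuffle_assoc_rapp_Y:
  fixes A B C :: ncpoly and \<alpha> \<beta> \<gamma> :: complex
  defines "a \<equiv> rapp (Y \<alpha>) A" and "b \<equiv> rapp (Y \<beta>) B" and "c \<equiv> rapp (Y \<gamma>) C"
  assumes Abc: "tstuffle s (tstuffle 1 A b) c = tstuffle s A (tstuffle s b c)"
    and aBc: "tstuffle s (tstuffle 1 a B) c = tstuffle s a (tstuffle s B c)"
    and ABc: "tstuffle s (tstuffle 1 A B) c = tstuffle s A (tstuffle s B c)"
    and abC: "tstuffle s (tstuffle 1 a b) C = tstuffle s a (tstuffle s b C)"
    and AbC: "tstuffle s (tstuffle 1 A b) C = tstuffle s A (tstuffle s b C)"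
    and aBC: "tstuffle s (tstuffle 1 a B) C = tstuffle s a (tstuffle s B C)"
    and ABC: "tstuffle s (tstuffle 1 A B) C = tstuffle s A (tstuffle s B C)"
  shows "tstuffle s (tstuffle 1 a b) c = tstuffle s a (tstuffle s b c)"
proof -
  define K where "K = tstuffle 1 A b + tstuffle 1 a B + rapp X (tstuffle 1 A B)"
  define L where "L = tstuffle s B c + tstuffle s b C + rapp X (tstuffle s B C)"
  have ab: "tstuffle 1 a b = rapp (Y \<beta>) K"
    unfolding K_def a_def b_def by simp
  have bc: "tstuffle s b c = rapp (Y \<gamma>) L"
    unfolding L_def c_def b_def by simp
  have "tstuffle s (tstuffle 1 a b) c = rapp (Y \<gamma>) (tstuffle s K c)
      + rapp (Y \<gamma>) (tstuffle s (rapp (Y \<beta>) K) C) + rapp (Y \<gamma>) (rapp X (tstuffle s K C))"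
    unfolding ab c_def by (rule tstuffle_rapp_Y_Y)
  also have "tstuffle s K c = tstuffle s A (tstuffle s b c) + tstuffle s a (tstuffle s B c)
      + rapp X (tstuffle s A (tstuffle s B c))"
    unfolding K_def by (simp only: tstuffle_add_left tstuffle_rapp_X_left Abc aBc ABc)
  also have "tstuffle s (rapp (Y \<beta>) K) C = tstuffle s a (tstuffle s b C)"
    unfolding ab[symmetric] by (rule abC)
  also have "tstuffle s K C = tstuffle s A (tstuffle s b C) + tstuffle s a (tstuffle s B C)
      + rapp X (tstuffle s A (tstuffle s B C))"
    unfolding K_def by (simp only: tstuffle_add_left tstuffle_rapp_X_left AbC aBC ABC)
  finally have lhs: "tstuffle s (tstuffle 1 a b) c =
      rapp (Y \<gamma>) (tstuffle s A (tstuffle s b c) + tstuffle s a (tstuffle s B c)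
        + rapp X (tstuffle s A (tstuffle s B c)))
      + rapp (Y \<gamma>) (tstuffle s a (tstuffle s b C))
      + rapp (Y \<gamma>) (rapp X (tstuffle s A (tstuffle s b C) + tstuffle s a (tstuffle s B C)
        + rapp X (tstuffle s A (tstuffle s B C))))" .
  have "tstuffle s a (tstuffle s b c) = rapp (Y \<gamma>) (tstuffle s A (rapp (Y \<gamma>) L))
      + rapp (Y \<gamma>) (tstuffle s a L) + rapp (Y \<gamma>) (rapp X (tstuffle s A L))"
    unfolding bc a_def by (rule tstuffle_rapp_Y_Y)
  also have "rapp (Y \<gamma>) L = tstuffle s b c"
    by (simp only: bc)
  finally have rhs: "tstuffle s a (tstuffle s b c) = rapp (Y \<gamma>) (tstuffle s A (tstuffle s b c))
      + rapp (Y \<gamma>) (tstuffle s a (tstuffle s B c) + tstuffle s a (tstuffle s b C)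
        + rapp X (tstuffle s a (tstuffle s B C)))
      + rapp (Y \<gamma>) (rapp X (tstuffle s A (tstuffle s B c) + tstuffle s A (tstuffle s b C)
        + rapp X (tstuffle s A (tstuffle s B C))))"
    unfolding L_def by (simp only: tstuffle_add_right tstuffle_rapp_X_right)
  show ?thesis
    unfolding lhs rhs by (simp only: rapp_add) (simp add: algebra_simps)
qed

lemma word_snoc_cases:
  obtains "w = []" | w' where "w = w' @ [X]" | w' t where "w = w' @ [Y t]"
  by (cases w rule: rev_cases) (auto intro: letter.exhaust)

lemma tstuffle_assoc_wd:
  "tstuffle s (tstuffle 1 (wd a) (wd b)) (wd c) = tstuffle s (wd a) (tstuffle s (wd b) (wd c))"
proof (induction "length a + length b + length c" arbitrary: a b c rule: less_induct)
  case less
  show ?case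
  proof (cases a rule: word_snoc_cases)
    case 1
    then show ?thesis by simp
  next
    case (2 a')
    then show ?thesis
      using less[of a' b c] by (simp add: wd_snoc)
  next
    case a: (3 a' \<alpha>)
    show ?thesis
    proof (cases b rule: word_snoc_cases)
      case 1
      then show ?thesis by (simp add: tstuffle_one_right tstuffle_reindex_left)
    next
      case (2 b')
      then show ?thesis
        using less[of a b' c] by (simp add: wd_snoc)
    next
      case b: (3 b' \<beta>)
      show ?thesis
      proof (cases c rule: word_snoc_cases)
        case 1
        then show ?thesis by (simp add: tstuffle_one_right reindex_tstuffle)
      next
        case (2 c')
        then show ?thesis
          using less[of a b c'] by (simp add: wd_snoc)
      next
        case c: (3 c' \<gamma>)
        have smaller: "tstuffle s (tstuffle 1 (wd a0) (wd b0)) (wd c0)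
            = tstuffle s (wd a0) (tstuffle s (wd b0) (wd c0))"
          if "a0 \<in> {a', a}" "b0 \<in> {b', b}" "c0 \<in> {c', c}" "(a0, b0, c0) \<noteq> (a, b, c)"
          for a0 b0 c0
          by (rule less) (use that a b c in auto)
        show ?thesis
          unfolding a b c
          by (rule tstuffle_assoc_rapp_Y[where A = "wd a'" and B = "wd b'" and C = "wd c'",
                unfolded wd_snoc[symmetric]])
             (rule smaller; simp add: a b c)+
      qed
    qed
  qed
qed

lemma tstuffle_expand_left: "tstuffle s p q = lin (\<lambda>a. tstuffle s (wd a) q) p"
  and tstuffle_expand_right: "tstuffle s p q = lin (\<lambda>b. tstuffle s p (wd b)) q"
  using tstuffle_lin_left[of s wd p q] tstuffle_lin_right[of s p wd q] by (simp_all add: lin_wd_id)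

lemma tstuffle_assoc: "tstuffle s (tstuffle 1 p q) r = tstuffle s p (tstuffle s q r)"
proof -
  have "tstuffle s (tstuffle 1 p q) r
      = lin (\<lambda>a. lin (\<lambda>b. tstuffle s (tstuffle 1 (wd a) (wd b)) r) q) p"
    by (simp only: tstuffle_conv_lin[of 1 p q] tstuffle_lin_left)
  also have "\<dots> = lin (\<lambda>a. lin (\<lambda>b. lin (\<lambda>c.
      tstuffle s (tstuffle 1 (wd a) (wd b)) (wd c)) r) q) p"
    by (subst tstuffle_expand_right) (rule refl)
  also have "\<dots> = lin (\<lambda>a. lin (\<lambda>b. lin (\<lambda>c.
      tstuffle s (wd a) (tstuffle s (wd b) (wd c))) r) q) p"
    by (simp only: tstuffle_assoc_wd)
  also have "\<dots> = lin (\<lambda>a. tstuffle s (wd a) (tstuffle s q r)) p"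
    by (simp only: tstuffle_conv_lin[of s q r] tstuffle_lin_right)
  also have "\<dots> = tstuffle s p (tstuffle s q r)"
    by (rule tstuffle_expand_left[symmetric])
  finally show ?thesis .
qed


definition Alg_word :: "nat \<Rightarrow> word \<Rightarrow> bool" where
  "Alg_word r w \<longleftrightarrow> (\<forall>t. Y t \<in> set w \<longrightarrow> t \<in> mu r)"

lemma Alg_word_simps [simp]:
  "Alg_word r []"
  "Alg_word r (X # w) \<longleftrightarrow> Alg_word r w"
  "Alg_word r (Y t # w) \<longleftrightarrow> t \<in> mu r \<and> Alg_word r w"
  "Alg_word r (w @ w') \<longleftrightarrow> Alg_word r w \<and> Alg_word r w'"
  "Alg_word r (rev w) \<longleftrightarrow> Alg_word r w"
  by (auto simp: Alg_word_def)

lemma mem_Alg_iff: "p \<in> Alg r \<longleftrightarrow> (\<forall>w\<in>Poly_Mapping.keys p. Alg_word r w)"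
  by (simp add: Alg_def Alg_word_def)

lemma one_in_mu [simp]: "1 \<in> mu r"
  by (simp add: mu_def)

lemma wd_in_Alg: "Alg_word r w \<Longrightarrow> wd w \<in> Alg r"
  by (simp add: mem_Alg_iff wd_def)

lemma Alg_diff: "p \<in> Alg r \<Longrightarrow> q \<in> Alg r \<Longrightarrow> p - q \<in> Alg r"
  using keys_diff by (fastforce simp: mem_Alg_iff)

lemma Alg_uminus: "p \<in> Alg r \<Longrightarrow> - p \<in> Alg r"
  by (simp add: mem_Alg_iff)

lemma Alg_add: "p \<in> Alg r \<Longrightarrow> q \<in> Alg r \<Longrightarrow> p + q \<in> Alg r"
  using keys_add by (fastforce simp: mem_Alg_iff)

lemma lin_in_Alg: "(\<And>w. w \<in> Poly_Mapping.keys p \<Longrightarrow> f w \<in> Alg r) \<Longrightarrow> lin f p \<in> Alg r"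
  using keys_lin[of f p] by (fastforce simp: mem_Alg_iff)

lemma rapp_in_Alg: "p \<in> Alg r \<Longrightarrow> Alg_word r [c] \<Longrightarrow> rapp c p \<in> Alg r"
  unfolding rapp_def by (rule lin_in_Alg, rule wd_in_Alg) (simp add: mem_Alg_iff)

lemma phi_wd_in_Alg: "Alg_word r w \<Longrightarrow> phi (wd w) \<in> Alg r"
proof (induction w rule: rev_induct)
  case (snoc c w)
  then show ?case
    by (cases c) (simp_all add: wd_snoc Alg_add Alg_diff Alg_uminus rapp_in_Alg)
qed (simp add: wd_in_Alg)

lemma phi_in_Alg: "p \<in> Alg r \<Longrightarrow> phi p \<in> Alg r"
  by (subst phi_conv_lin) (rule lin_in_Alg, rule phi_wd_in_Alg, simp add: mem_Alg_iff)

lemma Alg_word_reindex_y: "s \<in> mu r \<Longrightarrow> Alg_word r [reindex_y s l]"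
  by (cases l) simp_all

lemma Alg_word_map_reindex_y: "s \<in> mu r \<Longrightarrow> Alg_word r (map (reindex_y s) w)"
proof (induction w)
  case (Cons l w)
  then show ?case by (cases l) simp_all
qed simp

lemma tstuffle_rev_in_Alg: "s \<in> mu r \<Longrightarrow> Alg_word r b \<Longrightarrow> tstuffle_rev s a b \<in> Alg r"
  by (induction s a b rule: tstuffle_rev.induct)
     (simp_all add: wd_in_Alg rapp_in_Alg Alg_add Alg_word_reindex_y Alg_word_map_reindex_y
       del: rev_map)

lemma tstuffle_in_Alg: "s \<in> mu r \<Longrightarrow> q \<in> Alg r \<Longrightarrow> tstuffle s p q \<in> Alg r"
  unfolding tstuffle_def bilin_conv_lin
  by (intro lin_in_Alg tstuffle_rev_in_Alg) (simp_all add: mem_Alg_iff)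


section \<open>Conjugating the diamond product\<close>

lemma Iw_on_Alg_1: "Alg_word 1 w \<Longrightarrow> Iw acc w = map (reindex_y acc) w"
proof (induction w arbitrary: acc)
  case (Cons l w)
  then show ?case by (cases l) (auto simp: mu_def)
qed simp

lemma Iw_Mw_on_Alg_1: "Alg_word 1 w \<Longrightarrow> Iw 1 (Mw s w) = map (reindex_y s) w"
proof (induction w)
  case (Cons l w)
  then show ?case by (cases l) (auto simp: Iw_on_Alg_1 mu_def)
qed simp

lemma phi_dwr:
  "Alg_word 1 a \<Longrightarrow> phi (dwr s a b) = tstuffle s (phi (wd (rev a))) (phi (wd (rev b)))"
proof (induction s a b rule: dwr.induct)
  case (2 s l v)
  let ?p = "phi (wd (rev (l # v)))"
  have "phi (dwr s (l # v) []) = lin (\<lambda>w. wd (Iw 1 (Mw s w))) ?p"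
    by (simp add: psi_def)
  also have "\<dots> = reindex s ?p"
    unfolding reindex_def
  proof (rule lin_cong)
    have "?p \<in> Alg 1"
      using "2.prems" by (intro phi_wd_in_Alg) (simp only: Alg_word_simps)
    then show "w \<in> Poly_Mapping.keys ?p \<Longrightarrow> wd (Iw 1 (Mw s w)) = wd (map (reindex_y s) w)" for w
      by (simp add: mem_Alg_iff Iw_Mw_on_Alg_1)
  qed
  finally show ?case
    by (simp add: tstuffle_one_right)
next
  case (3 s v w)
  show ?case using "3.prems" by (simp add: wd_snoc "3.IH" algebra_simps mu_def)
next
  case (4 s v t w)
  show ?case using "4.prems" by (simp add: wd_snoc "4.IH" algebra_simps mu_def)
next
  case (5 s u v w)
  show ?case using "5.prems" by (simp add: wd_snoc "5.IH" algebra_simps mu_def)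
next
  case (6 s u v t w)
  show ?case using "6.prems" by (simp add: wd_snoc "6.IH" algebra_simps mu_def)
qed simp

lemma diamond_conv_tstuffle:
  assumes "p \<in> Alg 1"
  shows "diamond s p q = phi (tstuffle s (phi p) (phi q))"
proof -
  have "diamond s p q = lin (\<lambda>a. lin (\<lambda>b. dw s a b) q) p"
    by (simp add: diamond_def bilin_conv_lin)
  also have "\<dots> = lin (\<lambda>a. lin (\<lambda>b. phi (tstuffle s (phi (wd a)) (phi (wd b)))) q) p"
  proof (intro lin_cong)
    fix a b
    assume "a \<in> Poly_Mapping.keys p"
    then have "phi (dw s a b) = tstuffle s (phi (wd a)) (phi (wd b))"
      using assms phi_dwr[of "rev a" s "rev b"] by (simp add: dw_def mem_Alg_iff)
    then show "dw s a b = phi (tstuffle s (phi (wd a)) (phi (wd b)))"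
      by (metis phi_phi)
  qed
  also have "\<dots> = phi (tstuffle s (phi p) (phi q))"
    by (simp only: phi_conv_lin[of p] phi_conv_lin[of q] tstuffle_lin_left tstuffle_lin_right phi_lin)
       (rule lin_swap)
  finally show ?thesis .
qed

theorem mainTheorem10:
  fixes r :: nat and s :: complex and u v w :: ncpoly
  assumes "r \<ge> 1" and "s \<in> mu r"
    and "u \<in> Alg 1" and "v \<in> Alg 1" and "w \<in> Alg r"
  shows "diamond s (diamond 1 u v) w = diamond s u (diamond s v w)"
proof -
  have uv: "diamond 1 u v = phi (tstuffle 1 (phi u) (phi v))"
    using \<open>u \<in> Alg 1\<close> by (rule diamond_conv_tstuffle)
  have "diamond 1 u v \<in> Alg 1"
    unfolding uv using \<open>v \<in> Alg 1\<close> by (intro phi_in_Alg tstuffle_in_Alg) simp_all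
  then have "diamond s (diamond 1 u v) w = phi (tstuffle s (tstuffle 1 (phi u) (phi v)) (phi w))"
    by (simp add: diamond_conv_tstuffle uv)
  also have "\<dots> = phi (tstuffle s (phi u) (tstuffle s (phi v) (phi w)))"
    by (simp add: tstuffle_assoc)
  also have "\<dots> = diamond s u (diamond s v w)"
    using diamond_conv_tstuffle[OF \<open>u \<in> Alg 1\<close>] diamond_conv_tstuffle[OF \<open>v \<in> Alg 1\<close>] by simp
  finally show ?thesis .
qed

end
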